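(* Let $T\in\mathcal A$ and let $\mathbb Q=\mathbb Q(T)$. There is a family $\mathcal F$ of $\aleph_1$ many dense subsets of $\mathbb Q$ such that for every filter $G\subseteq\mathbb Q$ meeting every member of $\mathcal F$, letting $T^\ast=\bigcup\{<_p:p\in G\}$ (a tree order on $\bigcup\{u^p:p\in G\}$) and $c=\bigcup\{c^p:p\in G\}$, we have $(T^\ast,T,c)\in\mathcal A_2^{\rm sp}$.
   Context: For an ordinal $\gamma<\omega_1$, ${\rm ht}(\gamma)$ is the unique $\alpha$ with $\gamma\in[\omega\alpha,\omega\alpha+\omega)$; ${\rm ht}(\langle\rangle)=-1$. $\mathcal A$ denotes the set of all trees $T$ whose underlying set is $\{\langle\rangle\}\cup X$ for some $X\subseteq\omega_1$, where $\langle\rangle$ is the root, such that $T$ has height $\omega_1$, no uncountable branch, is normal (two distinct elements of the same limit level have different sets of predecessors), and ${\rm lev}_\alpha(T)\subseteq[\omega\alpha,\omega\alpha+\omega)$ for all $\alpha<\omega_1$. $x\cap_T y$ denotes the meet, $x\perp_T y$ incomparability, and for $(x,y)$ with both of level $\alpha$, $\alpha(x,y)=\alpha$. $\mathcal A_2^{\rm sp}$ is the set of triples $(T_1,T_2,c)$ with $T_1,T_2\in\mathcal A$ and $c:\bigcup_{\delta<\omega_1\text{ limit}}{\rm lev}_\delta(T_1)\times{\rm lev}_\delta(T_2)\to\omega$ such that $c(x_1,y_1)=c(x_2,y_2)$ with $(x_1,y_1)\ne(x_2,y_2)$ implies $\alpha(x_1,y_1)\ne\alpha(x_2,y_2)$,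 $x_1\perp_{T_1}x_2$, $y_1\perp_{T_2}y_2$ and ${\rm ht}(x_1\cap_{T_1}x_2)>{\rm ht}(y_1\cap_{T_2}y_2)$. The forcing $\mathbb Q(T)$ for $T\in\mathcal A$ consists of all $p=(u^p,v^p,<_p,c^p)$ such that: (1) $u^p\subseteq\omega_1\cup\{\langle\rangle\}$ and $v^p\subseteq T$ are finite and contain $\langle\rangle$; (2) for every $\alpha\in v^p$ there is $\beta\in u^p$ with ${\rm ht}(\alpha)={\rm ht}(\beta)$; (3) $<_p$ is a tree order on $u^p$ with root $\langle\rangle$, such that $\alpha<_p\beta$ implies ${\rm ht}(\alpha)<{\rm ht}(\beta)$ and any two distinct elements $\alpha,\beta\in u^p$ have a meet $\alpha\cap_{<_p}\beta\in u^p$; (4) $c^p$ is a function from $\bigcup_{\delta<\omega_1\text{ limit}}{\rm lev}_\delta(u^p)\times{\rm lev}_\delta(v^p)$ to $\omega$ (levels of $u^p$ meaning elements of height $\delta$, levels of $v^p$ meaning levels in $T$) such that if $c^p(x_1,y_1)=c^p(x_2,y_2)$ and $(x_1,y_1)\ne(x_2,y_2)$ then $\alpha(x_1,y_1)\ne\alpha(x_2,y_2)$, $x_1\perp_{<_p}x_2$, $y_1\perp_T y_2$ and ${\rm ht}(x_1\cap_{<_p}x_2)>{\rm ht}(y_1\cap_T y_2)$. The order: $p\le q$ iff $u^p\subseteq u^q$, $v^p\subseteq v^q$, $<_p\subseteq<_q$, $c^p\subseteq c^q$, and the meets (and root) computed in $<_p$ remain the meets (and root) in $<_q$. *)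

theory Defs
  imports Main "HOL-Library.Option_ord" "HOL-Library.Countable_Set"
begin

text \<open>Countable ordinals are modelled by a wellorder type 'o that is order-isomorphic
to omega_1 (hypotheses of the theorem). An ordinal gamma < omega_1 is written uniquely as
omega*alpha + n, and is encoded as the pair (alpha, n). The root is None.\<close>

type_synonym 'o node = "('o \<times> nat) option"

definition ht :: "'o node \<Rightarrow> 'o option" where
  "ht x = map_option fst x"

definition is_limit :: "'o::wellorder \<Rightarrow> bool" where
  "is_limit \<delta> \<longleftrightarrow> (\<exists>\<beta>. \<beta> < \<delta>) \<and> (\<forall>\<beta><\<delta>. \<exists>\<gamma>. \<beta> < \<gamma> \<and> \<gamma> < \<delta>)"

definition limit_ht :: "'o::wellorder node \<Rightarrow> bool" where
  "limit_ht x \<longleftrightarrow> (\<exists>\<delta>. ht x = Some \<delta> \<and> is_limit \<delta>)"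

definition tleq :: "('a \<Rightarrow> 'a \<Rightarrow> bool) \<Rightarrow> 'a \<Rightarrow> 'a \<Rightarrow> bool" where
  "tleq lt x y \<longleftrightarrow> lt x y \<or> x = y"

definition tree_on :: "'a set \<Rightarrow> ('a \<Rightarrow> 'a \<Rightarrow> bool) \<Rightarrow> 'a \<Rightarrow> bool" where
  "tree_on S lt r \<longleftrightarrow> r \<in> S \<and> (\<forall>x y. lt x y \<longrightarrow> x \<in> S \<and> y \<in> S)
     \<and> (\<forall>x. \<not> lt x x) \<and> (\<forall>x y z. lt x y \<longrightarrow> lt y z \<longrightarrow> lt x z)
     \<and> wfP lt
     \<and> (\<forall>x\<in>S. \<forall>y z. lt y x \<longrightarrow> lt z x \<longrightarrow> y = z \<or> lt y z \<or> lt z y)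
     \<and> (\<forall>x\<in>S. x \<noteq> r \<longrightarrow> lt r x)"

definition is_meet :: "('a \<Rightarrow> 'a \<Rightarrow> bool) \<Rightarrow> 'a \<Rightarrow> 'a \<Rightarrow> 'a \<Rightarrow> bool" where
  "is_meet lt x y z \<longleftrightarrow> tleq lt z x \<and> tleq lt z y \<and> (\<forall>w. tleq lt w x \<and> tleq lt w y \<longrightarrow> tleq lt w z)"

definition tmeet :: "('a \<Rightarrow> 'a \<Rightarrow> bool) \<Rightarrow> 'a \<Rightarrow> 'a \<Rightarrow> 'a" where
  "tmeet lt x y = (THE z. is_meet lt x y z)"

definition perp :: "('a \<Rightarrow> 'a \<Rightarrow> bool) \<Rightarrow> 'a \<Rightarrow> 'a \<Rightarrow> bool" where
  "perp lt x y \<longleftrightarrow> \<not> tleq lt x y \<and> \<not> tleq lt y x"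

definition is_chain :: "('a \<Rightarrow> 'a \<Rightarrow> bool) \<Rightarrow> 'a set \<Rightarrow> bool" where
  "is_chain lt B \<longleftrightarrow> (\<forall>x\<in>B. \<forall>y\<in>B. tleq lt x y \<or> tleq lt y x)"

definition is_branch :: "'a set \<Rightarrow> ('a \<Rightarrow> 'a \<Rightarrow> bool) \<Rightarrow> 'a set \<Rightarrow> bool" where
  "is_branch S lt B \<longleftrightarrow> B \<subseteq> S \<and> is_chain lt B
     \<and> (\<forall>C. B \<subseteq> C \<and> C \<subseteq> S \<and> is_chain lt C \<longrightarrow> C = B)"

text \<open>The level condition lev_alpha(T) subset [omega alpha, omega alpha + omega)
 says: the non-root predecessors of x are mapped by ht order-preservingly onto {beta. beta < ht x},
 i.e. x lies on tree level ht x.\<close>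
definition in_A :: "'o::wellorder node set \<times> ('o node \<Rightarrow> 'o node \<Rightarrow> bool) \<Rightarrow> bool" where
  "in_A T \<longleftrightarrow> (case T of (S, lt) \<Rightarrow>
      tree_on S lt None
    \<and> (\<forall>x y. lt x y \<longrightarrow> ht x < ht y)
    \<and> (\<forall>x\<in>S. x \<noteq> None \<longrightarrow> ht ` {y. lt y x \<and> y \<noteq> None} = {Some \<beta> | \<beta>. Some \<beta> < ht x})
    \<and> (\<forall>\<alpha>. \<exists>x\<in>S. ht x = Some \<alpha>)
    \<and> (\<forall>B. is_branch S lt B \<longrightarrow> countable B)
    \<and> (\<forall>x\<in>S. \<forall>y\<in>S. x \<noteq> y \<longrightarrow> ht x = ht y \<longrightarrow> limit_ht x \<longrightarrow> {z. lt z x} \<noteq> {z. lt z y}))"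

definition spec_col :: "('o::wellorder node \<Rightarrow> 'o node \<Rightarrow> bool) \<Rightarrow> ('o node \<Rightarrow> 'o node \<Rightarrow> bool)
    \<Rightarrow> ('o node \<times> 'o node \<rightharpoonup> nat) \<Rightarrow> bool" where
  "spec_col lt1 lt2 c \<longleftrightarrow> (\<forall>x1 y1 x2 y2. (x1, y1) \<in> dom c \<longrightarrow> (x2, y2) \<in> dom c
      \<longrightarrow> (x1, y1) \<noteq> (x2, y2) \<longrightarrow> c (x1, y1) = c (x2, y2) \<longrightarrow>
        ht x1 \<noteq> ht x2 \<and> perp lt1 x1 x2 \<and> perp lt2 y1 y2
        \<and> ht (tmeet lt1 x1 x2) > ht (tmeet lt2 y1 y2))"

definition limit_pairs :: "'o::wellorder node set \<Rightarrow> 'o node set \<Rightarrow> ('o node \<times> 'o node) set" where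
  "limit_pairs U V = {(x, y). x \<in> U \<and> y \<in> V \<and> ht x = ht y \<and> limit_ht x}"

definition in_A2sp :: "'o::wellorder node set \<times> ('o node \<Rightarrow> 'o node \<Rightarrow> bool)
    \<Rightarrow> 'o node set \<times> ('o node \<Rightarrow> 'o node \<Rightarrow> bool) \<Rightarrow> ('o node \<times> 'o node \<rightharpoonup> nat) \<Rightarrow> bool" where
  "in_A2sp T1 T2 c \<longleftrightarrow> in_A T1 \<and> in_A T2
     \<and> dom c = limit_pairs (fst T1) (fst T2)
     \<and> spec_col (snd T1) (snd T2) c"

type_synonym 'o cond =
  "'o node set \<times> 'o node set \<times> ('o node \<Rightarrow> 'o node \<Rightarrow> bool) \<times> ('o node \<times> 'o node \<rightharpoonup> nat)"

definition c_u :: "'o cond \<Rightarrow> 'o node set" where "c_u p = fst p"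
definition c_v :: "'o cond \<Rightarrow> 'o node set" where "c_v p = fst (snd p)"
definition c_lt :: "'o cond \<Rightarrow> ('o node \<Rightarrow> 'o node \<Rightarrow> bool)" where "c_lt p = fst (snd (snd p))"
definition c_col :: "'o cond \<Rightarrow> ('o node \<times> 'o node \<rightharpoonup> nat)" where "c_col p = snd (snd (snd p))"

definition is_cond :: "'o::wellorder node set \<times> ('o node \<Rightarrow> 'o node \<Rightarrow> bool) \<Rightarrow> 'o cond \<Rightarrow> bool" where
  "is_cond T p \<longleftrightarrow>
      finite (c_u p) \<and> None \<in> c_u p
    \<and> finite (c_v p) \<and> c_v p \<subseteq> fst T \<and> None \<in> c_v p
    \<and> (\<forall>a\<in>c_v p. \<exists>b\<in>c_u p. ht a = ht b)
    \<and> tree_on (c_u p) (c_lt p) None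
    \<and> (\<forall>a b. c_lt p a b \<longrightarrow> ht a < ht b)
    \<and> (\<forall>a\<in>c_u p. \<forall>b\<in>c_u p. a \<noteq> b \<longrightarrow> (\<exists>z\<in>c_u p. is_meet (c_lt p) a b z))
    \<and> dom (c_col p) = limit_pairs (c_u p) (c_v p)
    \<and> spec_col (c_lt p) (snd T) (c_col p)"

definition QQ :: "'o::wellorder node set \<times> ('o node \<Rightarrow> 'o node \<Rightarrow> bool) \<Rightarrow> 'o cond set" where
  "QQ T = {p. is_cond T p}"

text \<open>p \<le> q means q extends p (q is the stronger condition), as in the paper.\<close>
definition cle :: "'o cond \<Rightarrow> 'o cond \<Rightarrow> bool" where
  "cle p q \<longleftrightarrow> c_u p \<subseteq> c_u q \<and> c_v p \<subseteq> c_v q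
     \<and> (\<forall>a b. c_lt p a b \<longrightarrow> c_lt q a b)
     \<and> c_col p \<subseteq>\<^sub>m c_col q
     \<and> (\<forall>a\<in>c_u p. \<forall>b\<in>c_u p. a \<noteq> b \<longrightarrow> tmeet (c_lt q) a b = tmeet (c_lt p) a b)"

definition dense_in :: "'o cond set \<Rightarrow> 'o cond set \<Rightarrow> bool" where
  "dense_in Q D \<longleftrightarrow> D \<subseteq> Q \<and> (\<forall>p\<in>Q. \<exists>q\<in>D. cle p q)"

definition filter_in :: "'o cond set \<Rightarrow> 'o cond set \<Rightarrow> bool" where
  "filter_in Q G \<longleftrightarrow> G \<subseteq> Q \<and> G \<noteq> {}
     \<and> (\<forall>p\<in>G. \<forall>q\<in>Q. cle q p \<longrightarrow> q \<in> G)
     \<and> (\<forall>p\<in>G. \<forall>q\<in>G. \<exists>r\<in>G. cle p r \<and> cle q r)"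

end

theory Submission
  imports Defs
begin

text \<open>Every requirement on the generic object is captured by a dense set: a node x enters u,
x acquires a predecessor on a prescribed level below it, and a node of T enters v.  Density is
elementary: a new node w is inserted into a finite condition directly above some a and below an
upward closed set B of nodes, which leaves all old meets unchanged, and the new limit pairs get
fresh colours.  For a filter meeting these dense sets, the union of the conditions is a tree of
height omega_1 with the right levels; it is normal because meets are already computed inside a
single condition.  An uncountable branch would meet every level; choosing on it a node x_delta
and a node y_delta of T on each limit level delta, the colours c(x_delta, y_delta) would be
pairwise distinct, since equal colours force incomparable first coordinates.  This contradicts
the uncountability of the set of limit ordinals.\<close>

lemma tleq_refl [simp]: "tleq l x x"
  by (simp add: tleq_def)

lemma is_meet_commute: "is_meet l x y z \<longleftrightarrow> is_meet l y x z"
  unfolding is_meet_def by blast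

lemma tmeet_eq:
  assumes irrefl: "\<And>x. \<not> l x x" and trans: "\<And>x y z. l x y \<Longrightarrow> l y z \<Longrightarrow> l x z"
    and meet: "is_meet l x y z"
  shows "tmeet l x y = z"
proof -
  have uniq: "z' = z" if "is_meet l x y z'" for z'
  proof -
    have "tleq l z z'" "tleq l z' z" using that meet unfolding is_meet_def by blast+
    then show ?thesis using irrefl trans unfolding tleq_def by blast
  qed
  show ?thesis unfolding tmeet_def using meet uniq by (rule the_equality)
qed

lemma tree_onD:
  assumes "tree_on S l r"
  shows "r \<in> S" "\<And>x y. l x y \<Longrightarrow> x \<in> S" "\<And>x y. l x y \<Longrightarrow> y \<in> S"
    "\<And>x y z. l x y \<Longrightarrow> l y z \<Longrightarrow> l x z"
    "\<And>x y z. x \<in> S \<Longrightarrow> l y x \<Longrightarrow> l z x \<Longrightarrow> y = z \<or> l y z \<or> l z y"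
    "\<And>x. x \<in> S \<Longrightarrow> x \<noteq> r \<Longrightarrow> l r x"
  using assms unfolding tree_on_def by blast+

lemma branch_down_closed:
  assumes branch: "is_branch S l B" and trans: "\<And>x y z. l x y \<Longrightarrow> l y z \<Longrightarrow> l x z"
    and linear: "\<And>x y z. l y x \<Longrightarrow> l z x \<Longrightarrow> y = z \<or> l y z \<or> l z y"
    and "x \<in> B" "l y x" "y \<in> S"
  shows "y \<in> B"
proof -
  have chain: "tleq l z z' \<or> tleq l z' z" if "z \<in> B" "z' \<in> B" for z z'
    using branch that unfolding is_branch_def is_chain_def by blast
  have "tleq l y z \<or> tleq l z y" if "z \<in> B" for z
    using chain[OF that \<open>x \<in> B\<close>] \<open>l y x\<close> trans linear[OF \<open>l y x\<close>] unfolding tleq_def by blast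
  then have "is_chain l (insert y B)"
    using chain unfolding is_chain_def by (metis insert_iff tleq_refl)
  moreover have "insert y B \<subseteq> S" using branch \<open>y \<in> S\<close> unfolding is_branch_def by blast
  ultimately have "insert y B = B" using branch unfolding is_branch_def by blast
  then show ?thesis by blast
qed

lemma ht_None [simp]: "ht None = None" and ht_Some [simp]: "ht (Some (\<alpha>, n)) = Some \<alpha>"
  by (simp_all add: ht_def)

lemma not_None_if_ht_Some: "ht x = Some \<alpha> \<Longrightarrow> x \<noteq> None"
  by (cases x) simp_all

lemma ht_None_less: "x \<noteq> None \<Longrightarrow> ht None < ht x"
  by (cases x) (auto simp: ht_def)

lemma wfP_if_ht_mono:
  fixes l :: "'o::wellorder node \<Rightarrow> 'o node \<Rightarrow> bool"
  assumes "\<And>x y. l x y \<Longrightarrow> ht x < ht y"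
  shows "wfP l"
  using assms wfp_if_convertible_to_wfp wfp_on_less by blast

lemma fresh_node: "finite (u :: 'o node set) \<Longrightarrow> \<exists>n. Some (\<alpha>, n) \<notin> u"
proof (rule ccontr)
  assume "finite u" "\<nexists>n. Some (\<alpha>, n) \<notin> u"
  then have "finite (range (\<lambda>n::nat. Some (\<alpha>, n)))" by (auto intro: finite_subset)
  moreover have "inj (\<lambda>n::nat. Some (\<alpha>, n))" by (auto intro: injI)
  ultimately show False using finite_imageD by blast
qed

subsection \<open>Countable ordinals\<close>

lemma bounded_if_countable:
  fixes X :: "'o::wellorder set"
  assumes "uncountable (UNIV :: 'o set)" "\<forall>\<alpha>::'o. countable {\<beta>. \<beta> < \<alpha>}" "countable X"
  shows "\<exists>\<gamma>. \<forall>x\<in>X. x < \<gamma>"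
proof -
  have "countable (\<Union>x\<in>X. insert x {\<beta>. \<beta> < x})" using assms(2,3) by blast
  then have "(\<Union>x\<in>X. insert x {\<beta>. \<beta> < x}) \<noteq> UNIV" using assms(1) by auto
  then obtain \<gamma> where "\<gamma> \<notin> (\<Union>x\<in>X. insert x {\<beta>. \<beta> < x})" by blast
  then show ?thesis by (auto simp: not_less_iff_gr_or_eq)
qed

text \<open>Above any bound on the limits, the omega-th successor would be a larger limit.\<close>

lemma uncountable_limits:
  assumes unc: "uncountable (UNIV :: 'o::wellorder set)" and cnt: "\<forall>\<alpha>::'o. countable {\<beta>. \<beta> < \<alpha>}"
  shows "uncountable {\<delta>::'o. is_limit \<delta>}"
proof
  assume "countable {\<delta>::'o. is_limit \<delta>}"
  then obtain \<gamma>0 :: 'o where above: "\<forall>\<delta>\<in>{\<delta>. is_limit \<delta>}. \<delta> < \<gamma>0"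
    using bounded_if_countable[OF unc cnt] by blast
  define succ :: "'o \<Rightarrow> 'o" where "succ \<alpha> = (LEAST \<beta>. \<alpha> < \<beta>)" for \<alpha>
  have succ: "\<alpha> < succ \<alpha>" for \<alpha>
  proof -
    have "countable {\<alpha>}" by simp
    then obtain \<gamma> where "\<forall>x\<in>{\<alpha>}. x < \<gamma>" using bounded_if_countable[OF unc cnt] by blast
    then have "\<alpha> < \<gamma>" by simp
    then show ?thesis unfolding succ_def by (rule LeastI)
  qed
  define s where "s n = (succ ^^ n) \<gamma>0" for n
  have s_Suc: "s (Suc n) = succ (s n)" for n by (simp add: s_def)
  have "countable (range s)" by simp
  then obtain \<zeta>1 where "\<forall>x\<in>range s. x < \<zeta>1" using bounded_if_countable[OF unc cnt] by blast
  then have "\<forall>n. s n < \<zeta>1" by simp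
  define \<zeta> where "\<zeta> = (LEAST \<zeta>. \<forall>n. s n < \<zeta>)"
  have s_below: "\<forall>n. s n < \<zeta>" unfolding \<zeta>_def by (rule LeastI) fact
  have "is_limit \<zeta>"
    unfolding is_limit_def
  proof (intro conjI allI impI)
    show "\<exists>\<beta>. \<beta> < \<zeta>" using s_below by blast
    fix \<beta> assume "\<beta> < \<zeta>"
    then have "\<not> (\<forall>n. s n < \<beta>)" unfolding \<zeta>_def by (rule not_less_Least)
    then obtain n where "\<beta> \<le> s n" using not_less by blast
    then have "\<beta> < s (Suc n)" using succ[of "s n"] s_Suc[of n] by simp
    then show "\<exists>\<gamma>. \<beta> < \<gamma> \<and> \<gamma> < \<zeta>" using s_below by blast
  qed
  moreover have "\<gamma>0 < \<zeta>" using s_below[rule_format, of 0] by (simp add: s_def)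
  ultimately show False using above less_asym by blast
qed

subsection \<open>Finite trees with meets and the insertion of a node\<close>

locale meet_tree =
  fixes u :: "'o::wellorder node set" and l :: "'o node \<Rightarrow> 'o node \<Rightarrow> bool"
  assumes tree: "tree_on u l None"
    and ht_mono: "\<And>x y. l x y \<Longrightarrow> ht x < ht y"
    and meets: "\<And>x y. x \<in> u \<Longrightarrow> y \<in> u \<Longrightarrow> x \<noteq> y \<Longrightarrow> \<exists>z\<in>u. is_meet l x y z"
begin

lemma root_in: "None \<in> u"
  using tree_onD(1)[OF tree] .

lemma l_irrefl: "\<not> l x x"
  using ht_mono by blast

lemmas l_field = tree_onD(2,3)[OF tree]
  and l_trans = tree_onD(4)[OF tree]
  and l_below_linear = tree_onD(5)[OF tree]
  and l_root = tree_onD(6)[OF tree]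

lemma tleq_ht: "tleq l x y \<Longrightarrow> ht x \<le> ht y"
  unfolding tleq_def using ht_mono by fastforce

lemma tmeet_eqI: "is_meet l x y z \<Longrightarrow> tmeet l x y = z"
  by (rule tmeet_eq) (use l_irrefl l_trans in blast)+

lemma is_meet_tmeet: "x \<in> u \<Longrightarrow> y \<in> u \<Longrightarrow> x \<noteq> y \<Longrightarrow> is_meet l x y (tmeet l x y) \<and> tmeet l x y \<in> u"
  using meets tmeet_eqI by metis

end

text \<open>The node w is placed directly above a and directly below the minimal elements of B.\<close>

definition ins_lt :: "('a \<Rightarrow> 'a \<Rightarrow> bool) \<Rightarrow> 'a \<Rightarrow> 'a \<Rightarrow> 'a set \<Rightarrow> 'a \<Rightarrow> 'a \<Rightarrow> bool" where
  "ins_lt l w a B y z \<longleftrightarrow> l y z \<or> (z = w \<and> tleq l y a) \<or> (y = w \<and> z \<in> B)"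

locale node_insertion = meet_tree +
  fixes w a :: "'o::wellorder node" and B :: "'o node set"
  assumes w_fresh: "w \<notin> u" and a_in: "a \<in> u" and ht_a_w: "ht a < ht w"
    and B_sub: "B \<subseteq> u"
    and B_above: "\<And>z. z \<in> B \<Longrightarrow> l a z \<and> ht w < ht z"
    and B_preds: "\<And>y z. z \<in> B \<Longrightarrow> l y z \<Longrightarrow> y \<in> B \<or> tleq l y a"
    and B_up: "\<And>z z'. z \<in> B \<Longrightarrow> l z z' \<Longrightarrow> z' \<in> B"
    and B_meet: "\<And>z1 z2. z1 \<in> B \<Longrightarrow> z2 \<in> B \<Longrightarrow> z1 \<noteq> z2 \<Longrightarrow> tmeet l z1 z2 \<in> B"
begin

abbreviation lw :: "'o node \<Rightarrow> 'o node \<Rightarrow> bool" where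
  "lw \<equiv> ins_lt l w a B"

lemma not_l_w: "\<not> l w y" "\<not> l y w"
  using l_field w_fresh by blast+

lemma lw_old: "y \<noteq> w \<Longrightarrow> z \<noteq> w \<Longrightarrow> lw y z \<longleftrightarrow> l y z"
  by (auto simp: ins_lt_def)

lemma tleq_lw_old: "y \<noteq> w \<Longrightarrow> z \<noteq> w \<Longrightarrow> tleq lw y z \<longleftrightarrow> tleq l y z"
  using lw_old unfolding tleq_def by blast

lemma lw_if_l: "l y z \<Longrightarrow> lw y z"
  by (simp add: ins_lt_def)

lemma lw_to_w: "lw y w \<longleftrightarrow> tleq l y a"
  using not_l_w B_sub w_fresh by (auto simp: ins_lt_def)

lemma lw_from_w: "lw w z \<longleftrightarrow> z \<in> B"
  using not_l_w a_in w_fresh B_sub by (auto simp: ins_lt_def tleq_def)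

lemma lw_ht_mono: "lw y z \<Longrightarrow> ht y < ht z"
  using ht_mono ht_a_w B_above tleq_ht[of y a] by (auto simp: ins_lt_def)

lemma lw_trans:
  assumes "lw x y" "lw y z"
  shows "lw x z"
proof (cases "y = w")
  case True
  then have "tleq l x a" "z \<in> B" using assms lw_to_w lw_from_w by blast+
  then show ?thesis using B_above l_trans lw_if_l unfolding tleq_def by blast
next
  case False
  consider "x = w" "z = w" | "x = w" "z \<noteq> w" | "x \<noteq> w" "z = w" | "x \<noteq> w" "z \<noteq> w"
    by blast
  then show ?thesis
  proof cases
    case 1
    then show ?thesis using lw_ht_mono[OF assms(1)] lw_ht_mono[OF assms(2)] by simp
  next
    case 2
    then show ?thesis using assms False B_up lw_from_w lw_old by blast
  next
    case 3
    then show ?thesis using assms False l_trans lw_old lw_to_w unfolding tleq_def by blast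
  next
    case 4
    then show ?thesis using assms False l_trans lw_old by blast
  qed
qed

lemma lw_below_linear:
  assumes "x \<in> insert w u" "lw y x" "lw z x"
  shows "y = z \<or> lw y z \<or> lw z y"
proof (cases "x = w")
  case True
  then have "tleq l y a" "tleq l z a" using assms lw_to_w by blast+
  then show ?thesis using l_below_linear[OF a_in] lw_if_l unfolding tleq_def by blast
next
  case False
  then have x: "x \<in> u" using assms(1) by blast
  have y: "l y x \<or> y = w \<and> x \<in> B" and z: "l z x \<or> z = w \<and> x \<in> B"
    using assms False by (auto simp: ins_lt_def)
  have new_old: "lw w v \<or> lw v w" if "l v x" "x \<in> B" for v
    using B_preds[OF \<open>x \<in> B\<close> \<open>l v x\<close>] lw_from_w lw_to_w by blast
  consider "y = w" "z = w" | "y = w" "z \<noteq> w" | "y \<noteq> w" "z = w" | "y \<noteq> w" "z \<noteq> w"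
    by blast
  then show ?thesis
  proof cases
    case 2
    then show ?thesis using new_old y z not_l_w by blast
  next
    case 3
    then show ?thesis using new_old y z not_l_w by blast
  next
    case 4
    then show ?thesis using l_below_linear[OF x] y z lw_if_l by blast
  qed simp
qed

lemma tree_on_lw: "tree_on (insert w u) lw None"
  unfolding tree_on_def
proof (intro conjI)
  show "\<forall>x\<in>insert w u. x \<noteq> None \<longrightarrow> lw None x"
  proof (intro ballI impI)
    fix x assume "x \<in> insert w u" "x \<noteq> None"
    show "lw None x"
    proof (cases "x = w")
      case True
      have "tleq l None a" using l_root[OF a_in] unfolding tleq_def by metis
      then show ?thesis using True lw_to_w by blast
    next
      case False
      then show ?thesis using \<open>x \<in> insert w u\<close> \<open>x \<noteq> None\<close> l_root lw_if_l by blast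
    qed
  qed
  show "\<forall>y z. lw y z \<longrightarrow> y \<in> insert w u \<and> z \<in> insert w u"
    using l_field a_in B_sub unfolding ins_lt_def tleq_def by blast
  show "None \<in> insert w u" using root_in by blast
  show "\<forall>x. \<not> lw x x" using lw_ht_mono by blast
  show "\<forall>x y z. lw x y \<longrightarrow> lw y z \<longrightarrow> lw x z" using lw_trans by blast
  show "wfP lw" using lw_ht_mono by (rule wfP_if_ht_mono)
  show "\<forall>x\<in>insert w u. \<forall>y z. lw y x \<longrightarrow> lw z x \<longrightarrow> y = z \<or> lw y z \<or> lw z y"
    using lw_below_linear by blast
qed

lemma is_meet_lw_old:
  assumes "x \<in> u" "y \<in> u" "x \<noteq> y"
  shows "is_meet lw x y (tmeet l x y)"
proof -
  define m where "m = tmeet l x y"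
  have m: "is_meet l x y m" "m \<in> u" using is_meet_tmeet[OF assms] unfolding m_def by blast+
  have old: "x \<noteq> w" "y \<noteq> w" "m \<noteq> w" using assms m(2) w_fresh by blast+
  have "tleq lw z m" if "tleq lw z x" "tleq lw z y" for z
  proof (cases "z = w")
    case True
    then have "x \<in> B" "y \<in> B" using that old lw_from_w unfolding tleq_def by blast+
    then have "m \<in> B" using B_meet assms(3) unfolding m_def by blast
    then show ?thesis using True lw_from_w unfolding tleq_def by blast
  next
    case False
    then show ?thesis using that m(1) tleq_lw_old old unfolding is_meet_def by blast
  qed
  then show ?thesis using m(1) tleq_lw_old old unfolding is_meet_def m_def by blast
qed

lemma tmeet_lw_old: "x \<in> u \<Longrightarrow> y \<in> u \<Longrightarrow> x \<noteq> y \<Longrightarrow> tmeet lw x y = tmeet l x y"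
  using is_meet_lw_old by (rule tmeet_eq[rotated 2]) (use lw_ht_mono lw_trans in blast)+

lemma is_meet_lw_new:
  assumes "y \<in> u"
  shows "\<exists>m\<in>insert w u. is_meet lw w y m"
proof (cases "y \<in> B")
  case True
  then have "is_meet lw w y w" using lw_from_w unfolding is_meet_def tleq_def by blast
  then show ?thesis by blast
next
  case False
  obtain m where m: "m \<in> u" "is_meet l a y m"
  proof (cases "a = y")
    case True
    then show ?thesis using that a_in unfolding is_meet_def by simp
  next
    case False
    then show ?thesis using that meets[OF a_in assms] by blast
  qed
  have old: "y \<noteq> w" "m \<noteq> w" using assms m(1) w_fresh by blast+
  have "tleq l m a" "tleq l m y" using m(2) unfolding is_meet_def by blast+
  then have lower: "tleq lw m w" "tleq lw m y"
    using lw_to_w tleq_lw_old[OF old(2,1)] unfolding tleq_def by blast+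
  have greatest: "tleq lw z m" if z: "tleq lw z w" "tleq lw z y" for z
  proof -
    have "z \<noteq> w"
    proof
      assume "z = w"
      then have "lw w y" using z(2) old(1) unfolding tleq_def by blast
      then show False using False lw_from_w by blast
    qed
    then have "tleq l z a" using z(1) lw_to_w unfolding tleq_def by blast
    moreover have "tleq l z y" using z(2) tleq_lw_old[OF \<open>z \<noteq> w\<close> old(1)] by blast
    ultimately have "tleq l z m" using m(2) unfolding is_meet_def by blast
    then show ?thesis using tleq_lw_old[OF \<open>z \<noteq> w\<close> old(2)] by blast
  qed
  show ?thesis using m(1) lower greatest unfolding is_meet_def by blast
qed

lemma meet_tree_lw: "meet_tree (insert w u) lw"
proof (rule meet_tree.intro)
  show "tree_on (insert w u) lw None" by (rule tree_on_lw)
  show "ht x < ht y" if "lw x y" for x y using that by (rule lw_ht_mono)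
  fix x y assume xy: "x \<in> insert w u" "y \<in> insert w u" "x \<noteq> y"
  consider "x = w" "y \<in> u" | "y = w" "x \<in> u" | "x \<in> u" "y \<in> u"
    using xy by blast
  then show "\<exists>z\<in>insert w u. is_meet lw x y z"
  proof cases
    case 1
    then show ?thesis using is_meet_lw_new by simp
  next
    case 2
    then show ?thesis using is_meet_lw_new[of x] by (simp add: is_meet_commute)
  next
    case 3
    then have "is_meet lw x y (tmeet l x y)" "tmeet l x y \<in> u"
      using is_meet_lw_old is_meet_tmeet xy(3) by blast+
    then show ?thesis by blast
  qed
qed

end

subsection \<open>Conditions\<close>

lemma cond_sel [simp]:
  "c_u (u, v, l, c) = u" "c_v (u, v, l, c) = v" "c_lt (u, v, l, c) = l" "c_col (u, v, l, c) = c"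
  by (simp_all add: c_u_def c_v_def c_lt_def c_col_def)

lemma meet_tree_cond: "is_cond T p \<Longrightarrow> meet_tree (c_u p) (c_lt p)"
  unfolding is_cond_def meet_tree_def by blast

lemma cond_dom_col: "is_cond T p \<Longrightarrow> dom (c_col p) = limit_pairs (c_u p) (c_v p)"
  and cond_spec_col: "is_cond T p \<Longrightarrow> spec_col (c_lt p) (snd T) (c_col p)"
  and cond_v_sub: "is_cond T p \<Longrightarrow> c_v p \<subseteq> fst T"
  by (simp_all add: is_cond_def)

lemma cle_refl: "cle p p"
  by (simp add: cle_def map_le_refl)

lemma cleD:
  assumes "cle p q"
  shows "c_u p \<subseteq> c_u q" "c_v p \<subseteq> c_v q" "c_lt p a b \<Longrightarrow> c_lt q a b" "c_col p \<subseteq>\<^sub>m c_col q"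
    "a \<in> c_u p \<Longrightarrow> b \<in> c_u p \<Longrightarrow> a \<noteq> b \<Longrightarrow> tmeet (c_lt q) a b = tmeet (c_lt p) a b"
  using assms unfolding cle_def by blast+

lemma cle_trans:
  assumes pq: "cle p q" and qr: "cle q r"
  shows "cle p r"
  unfolding cle_def
proof (intro conjI allI impI ballI)
  show "c_u p \<subseteq> c_u r" "c_v p \<subseteq> c_v r" using cleD(1,2)[OF pq] cleD(1,2)[OF qr] by blast+
  show "c_lt r a b" if "c_lt p a b" for a b using cleD(3)[OF pq] cleD(3)[OF qr] that by blast
  show "c_col p \<subseteq>\<^sub>m c_col r" using cleD(4)[OF pq] cleD(4)[OF qr] by (rule map_le_trans)
  fix a b assume ab: "a \<in> c_u p" "b \<in> c_u p" "a \<noteq> b"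
  then have "a \<in> c_u q" "b \<in> c_u q" using cleD(1)[OF pq] by blast+
  then show "tmeet (c_lt r) a b = tmeet (c_lt p) a b"
    using cleD(5)[OF pq ab] cleD(5)[OF qr _ _ ab(3)] by simp
qed

lemma cle_reflects_lt:
  assumes p: "is_cond T p" and r: "is_cond T r" and "cle p r"
    and ab: "a \<in> c_u p" "b \<in> c_u p" and "c_lt r a b"
  shows "c_lt p a b"
proof -
  interpret p: meet_tree "c_u p" "c_lt p" using meet_tree_cond[OF p] .
  interpret r: meet_tree "c_u r" "c_lt r" using meet_tree_cond[OF r] .
  have ne: "a \<noteq> b" using \<open>c_lt r a b\<close> r.l_irrefl by blast
  have "is_meet (c_lt r) a b a" using \<open>c_lt r a b\<close> unfolding is_meet_def tleq_def by blast
  then have "tmeet (c_lt r) a b = a" by (rule r.tmeet_eqI)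
  moreover have "tmeet (c_lt r) a b = tmeet (c_lt p) a b" using cleD(5)[OF \<open>cle p r\<close> ab ne] .
  ultimately have "tmeet (c_lt p) a b = a" by simp
  then have "tleq (c_lt p) a b" using p.is_meet_tmeet[OF ab ne] unfolding is_meet_def by simp
  then show ?thesis using ne unfolding tleq_def by blast
qed

lemma spec_colD:
  assumes "spec_col l1 l2 c" "(x1, y1) \<in> dom c" "(x2, y2) \<in> dom c" "(x1, y1) \<noteq> (x2, y2)"
    "c (x1, y1) = c (x2, y2)"
  shows "ht x1 \<noteq> ht x2 \<and> perp l1 x1 x2 \<and> perp l2 y1 y2 \<and> ht (tmeet l2 y1 y2) < ht (tmeet l1 x1 x2)"
  using assms unfolding spec_col_def by blast

lemma finite_limit_pairs: "finite U \<Longrightarrow> finite V \<Longrightarrow> finite (limit_pairs U V)"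
  by (rule finite_subset[of _ "U \<times> V"]) (auto simp: limit_pairs_def)

text \<open>Keys outside dom col receive pairwise distinct colours above all old ones, so equal colours
only occur on old keys.\<close>

lemma spec_col_extend:
  assumes fin: "finite (dom col)" "finite N" and disj: "N \<inter> dom col = {}"
    and sc: "spec_col l lt col"
    and perp_old: "\<And>x1 y1 x2 y2. (x1, y1) \<in> dom col \<Longrightarrow> (x2, y2) \<in> dom col \<Longrightarrow> perp l x1 x2 \<Longrightarrow>
        perp l' x1 x2 \<and> tmeet l' x1 x2 = tmeet l x1 x2"
  shows "\<exists>col'. col \<subseteq>\<^sub>m col' \<and> dom col' = dom col \<union> N \<and> spec_col l' lt col'"
proof -
  obtain f :: "_ \<Rightarrow> nat" where f: "inj_on f N"
    using finite_imp_inj_to_nat_seg[OF fin(2)] by blast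
  define M where "M = Suc (Max (insert 0 (ran col)))"
  have below_M: "m < M" if "col k = Some m" for k m
  proof -
    have "m \<in> ran col" using that by (rule ranI)
    then have "m \<le> Max (insert 0 (ran col))" using finite_ran[OF fin(1)] by simp
    then show ?thesis by (simp add: M_def)
  qed
  define col' where "col' k = (if k \<in> N then Some (M + f k) else col k)" for k
  have le: "col \<subseteq>\<^sub>m col'" using disj by (auto simp: map_le_def col'_def)
  have dom: "dom col' = dom col \<union> N" by (auto simp: col'_def)
  have new_distinct: "col' k1 \<noteq> col' k2" if k: "k1 \<in> N" "k2 \<in> dom col'" "k1 \<noteq> k2" for k1 k2
  proof (cases "k2 \<in> N")
    case True
    then show ?thesis using k f by (auto simp: col'_def inj_on_def)
  next
    case False
    then obtain m where "col k2 = Some m" using k(2) by (auto simp: col'_def)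
    then show ?thesis using below_M[of k2 m] k(1) False by (auto simp: col'_def)
  qed
  have old: "k1 \<in> dom col \<and> k2 \<in> dom col"
    if "k1 \<in> dom col'" "k2 \<in> dom col'" "k1 \<noteq> k2" "col' k1 = col' k2" for k1 k2
  proof -
    have "k1 \<notin> N" "k2 \<notin> N" using new_distinct that by metis+
    then show ?thesis using that(1,2) dom by blast
  qed
  have "spec_col l' lt col'"
    unfolding spec_col_def
  proof (intro allI impI)
    fix x1 y1 x2 y2
    assume h: "(x1, y1) \<in> dom col'" "(x2, y2) \<in> dom col'" "(x1, y1) \<noteq> (x2, y2)"
      "col' (x1, y1) = col' (x2, y2)"
    then have d: "(x1, y1) \<in> dom col" "(x2, y2) \<in> dom col" using old by blast+
    then have "col (x1, y1) = col (x2, y2)" using h(4) le unfolding map_le_def by (metis domIff)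
    then have "ht x1 \<noteq> ht x2 \<and> perp l x1 x2 \<and> perp lt y1 y2
        \<and> ht (tmeet lt y1 y2) < ht (tmeet l x1 x2)"
      using spec_colD[OF sc d h(3)] by blast
    moreover from this have "perp l' x1 x2 \<and> tmeet l' x1 x2 = tmeet l x1 x2"
      using perp_old[OF d] by blast
    ultimately show "ht x1 \<noteq> ht x2 \<and> perp l' x1 x2 \<and> perp lt y1 y2
        \<and> ht (tmeet lt y1 y2) < ht (tmeet l' x1 x2)"
      by simp
  qed
  then show ?thesis using le dom by blast
qed

lemma cond_insert_node:
  assumes cond: "is_cond T (u, v, l, col)" and ins: "node_insertion u l w a B"
  shows "\<exists>col'. is_cond T (insert w u, v, ins_lt l w a B, col')
    \<and> cle (u, v, l, col) (insert w u, v, ins_lt l w a B, col')"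
proof -
  interpret node_insertion u l w a B by (rule ins)
  interpret new: meet_tree "insert w u" lw by (rule meet_tree_lw)
  have fin: "finite u" "finite v" and dc: "dom col = limit_pairs u v"
    using cond by (simp_all add: is_cond_def)
  have "\<exists>col'. col \<subseteq>\<^sub>m col' \<and> dom col' = dom col \<union> limit_pairs {w} v \<and> spec_col lw (snd T) col'"
  proof (rule spec_col_extend)
    show "finite (dom col)" "finite (limit_pairs {w} v)"
      using fin by (simp_all add: dc finite_limit_pairs)
    show "limit_pairs {w} v \<inter> dom col = {}" using w_fresh by (auto simp: dc limit_pairs_def)
    show "spec_col l (snd T) col" using cond_spec_col[OF cond] by simp
    fix x1 y1 x2 y2 assume "(x1, y1) \<in> dom col" "(x2, y2) \<in> dom col" "perp l x1 x2"
    then have x: "x1 \<in> u" "x2 \<in> u" "x1 \<noteq> x2" by (auto simp: dc limit_pairs_def perp_def)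
    then have "x1 \<noteq> w" "x2 \<noteq> w" using w_fresh by blast+
    then have "perp lw x1 x2 \<longleftrightarrow> perp l x1 x2" by (simp add: perp_def tleq_lw_old)
    then show "perp lw x1 x2 \<and> tmeet lw x1 x2 = tmeet l x1 x2"
      using \<open>perp l x1 x2\<close> tmeet_lw_old[OF x] by blast
  qed
  then obtain col' where col': "col \<subseteq>\<^sub>m col'" "dom col' = dom col \<union> limit_pairs {w} v"
    "spec_col lw (snd T) col'"
    by blast
  have dom': "dom col' = limit_pairs (insert w u) v"
    unfolding col'(2) dc by (auto simp: limit_pairs_def)
  have "finite (insert w u)" "None \<in> v" "v \<subseteq> fst T" "\<forall>a\<in>v. \<exists>b\<in>u. ht a = ht b"
    using cond by (simp_all add: is_cond_def)
  then have "is_cond T (insert w u, v, lw, col')"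
    using fin(2) dom' col'(3) new.tree new.ht_mono new.meets root_in
    unfolding is_cond_def cond_sel by blast
  moreover have "cle (u, v, l, col) (insert w u, v, lw, col')"
    using col'(1) lw_if_l tmeet_lw_old unfolding cle_def cond_sel by blast
  ultimately show ?thesis by blast
qed

lemma cond_insert_v:
  assumes cond: "is_cond T (u, v, l, col)" and "s \<in> fst T" "b \<in> u" "ht b = ht s"
  shows "\<exists>col'. is_cond T (u, insert s v, l, col') \<and> cle (u, v, l, col) (u, insert s v, l, col')"
proof -
  have fin: "finite u" "finite v" and dc: "dom col = limit_pairs u v"
    using cond by (simp_all add: is_cond_def)
  obtain col' where col': "col \<subseteq>\<^sub>m col'"
    "dom col' = dom col \<union> (limit_pairs u (insert s v) - dom col)" "spec_col l (snd T) col'"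
    using spec_col_extend[of col "limit_pairs u (insert s v) - dom col" l "snd T" l]
      cond_spec_col[OF cond] fin by (auto simp: dc finite_limit_pairs)
  have "dom col' = limit_pairs u (insert s v)" using col'(2) by (auto simp: dc limit_pairs_def)
  moreover have "\<forall>a\<in>insert s v. \<exists>b\<in>u. ht a = ht b"
    using cond assms(3,4) unfolding is_cond_def by (metis cond_sel(1,2) insert_iff)
  moreover have "finite (insert s v)" "insert s v \<subseteq> fst T"
    using cond assms(2) by (simp_all add: is_cond_def)
  ultimately have "is_cond T (u, insert s v, l, col')"
    using cond col'(3) unfolding is_cond_def cond_sel by blast
  moreover have "cle (u, v, l, col) (u, insert s v, l, col')"
    using col'(1) unfolding cle_def cond_sel by blast
  ultimately show ?thesis by blast
qed

lemma cond_add_node: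
  assumes cond: "is_cond T p"
  shows "\<exists>q. is_cond T q \<and> cle p q \<and> c_u q = insert x (c_u p)"
proof (cases "x \<in> c_u p")
  case True
  then have "c_u p = insert x (c_u p)" by blast
  then show ?thesis using cond cle_refl by blast
next
  case False
  obtain u v l col where p: "p = (u, v, l, col)" by (cases p)
  have cond': "is_cond T (u, v, l, col)" using cond by (simp add: p)
  interpret meet_tree u l using meet_tree_cond[OF cond'] by simp
  have "x \<notin> u" using False by (simp add: p)
  have "x \<noteq> None"
  proof
    assume "x = None"
    then show False using \<open>x \<notin> u\<close> root_in by simp
  qed
  then have "node_insertion u l x None {}"
    using \<open>x \<notin> u\<close> root_in ht_None_less by unfold_locales auto
  then obtain col' where "is_cond T (insert x u, v, ins_lt l x None {}, col')"
    "cle (u, v, l, col) (insert x u, v, ins_lt l x None {}, col')"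
    using cond_insert_node[OF cond'] by blast
  then show ?thesis
    unfolding p by (intro exI[of _ "(insert x u, v, ins_lt l x None {}, col')"]) simp
qed

lemma cond_add_v:
  assumes cond: "is_cond T p" and "s \<in> fst T"
  shows "\<exists>q. is_cond T q \<and> cle p q \<and> s \<in> c_v q"
proof -
  obtain q where q: "is_cond T q" "cle p q" "s \<in> c_u q" using cond_add_node[OF cond] by blast
  obtain u v l col where qq: "q = (u, v, l, col)" by (cases q)
  then obtain col' where "is_cond T (u, insert s v, l, col')" "cle q (u, insert s v, l, col')"
    using cond_insert_v[OF _ assms(2), of u v l col s] q(1,3) by auto
  then show ?thesis using cle_trans[OF q(2)] by fastforce
qed

lemma (in meet_tree) predecessor_gap:
  assumes "finite u" "x \<in> u" "Some \<beta> < ht x" and no_pred: "\<nexists>y. l y x \<and> ht y = Some \<beta>"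
  obtains a b where "l a b" "tleq l b x" "ht a < Some \<beta>" "Some \<beta> < ht b"
    "\<And>y. l y b \<Longrightarrow> tleq l y a"
proof -
  define P where "P = {y. tleq l y x}"
  have "P \<subseteq> u" using \<open>x \<in> u\<close> l_field by (auto simp: P_def tleq_def)
  then have "finite P" using \<open>finite u\<close> by (rule finite_subset)
  have P_chain: "y = z \<or> l y z \<or> l z y" if "y \<in> P" "z \<in> P" for y z
    using that l_below_linear[OF \<open>x \<in> u\<close>] by (auto simp: P_def tleq_def)
  have P_ht: "ht y \<noteq> Some \<beta>" if "y \<in> P" for y
    using that no_pred \<open>Some \<beta> < ht x\<close> by (auto simp: P_def tleq_def)
  define A where "A = {y \<in> P. ht y < Some \<beta>}"
  define C where "C = {y \<in> P. Some \<beta> < ht y}"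
  have "x \<noteq> None"
  proof
    assume "x = None"
    then show False using assms(3) by simp
  qed
  then have "None \<in> A" using assms(2) l_root by (auto simp: A_def P_def tleq_def)
  moreover have "finite A" using \<open>finite P\<close> by (simp add: A_def)
  ultimately have "Max (ht ` A) \<in> ht ` A" by (intro Max_in) auto
  then obtain a where a: "a \<in> A" "ht a = Max (ht ` A)" by auto
  have a_max: "ht y \<le> ht a" if "y \<in> A" for y
    using that a(2) \<open>finite A\<close> by simp
  have "x \<in> C" using assms(3) by (simp add: C_def P_def)
  moreover have "finite C" using \<open>finite P\<close> by (simp add: C_def)
  ultimately have "Min (ht ` C) \<in> ht ` C" by (intro Min_in) auto
  then obtain b where b: "b \<in> C" "ht b = Min (ht ` C)" by auto
  have b_min: "ht b \<le> ht y" if "y \<in> C" for y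
    using that b(2) \<open>finite C\<close> by simp
  show ?thesis
  proof
    show "l a b" using P_chain[of a b] a(1) b(1) ht_mono[of b a] by (auto simp: A_def C_def)
    show "tleq l b x" "ht a < Some \<beta>" "Some \<beta> < ht b"
      using a(1) b(1) by (auto simp: A_def C_def P_def)
    fix y assume "l y b"
    then have "y \<in> P" "ht y < ht b" using b(1) l_trans ht_mono by (auto simp: C_def P_def tleq_def)
    then have "y \<in> A" using b_min P_ht[of y] by (fastforce simp: A_def C_def)
    then have "\<not> l a y" using a_max ht_mono by fastforce
    then show "tleq l y a" using P_chain[of y a] \<open>y \<in> P\<close> a(1) by (auto simp: A_def tleq_def)
  qed
qed

text \<open>The new node on level beta is inserted above the last node below x under level beta and
below the cone of the first node below x above level beta.\<close>

lemma cond_add_predecessor: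
  assumes cond: "is_cond T p" and x: "x \<in> c_u p" "Some \<beta> < ht x"
  shows "\<exists>q. is_cond T q \<and> cle p q \<and> (\<exists>y. c_lt q y x \<and> ht y = Some \<beta>)"
proof (cases "\<exists>y. c_lt p y x \<and> ht y = Some \<beta>")
  case True
  then show ?thesis using cond cle_refl by blast
next
  case False
  obtain u v l col where p: "p = (u, v, l, col)" by (cases p)
  interpret meet_tree u l using meet_tree_cond[OF cond] by (simp add: p)
  have "finite u" using cond by (simp add: p is_cond_def)
  moreover have "x \<in> u" "\<nexists>y. l y x \<and> ht y = Some \<beta>" using x(1) False by (simp_all add: p)
  ultimately obtain a b where ab: "l a b" "tleq l b x" "ht a < Some \<beta>" "Some \<beta> < ht b"
    and between: "\<And>y. l y b \<Longrightarrow> tleq l y a"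
    using predecessor_gap x(2) by blast
  obtain n where w: "Some (\<beta>, n) \<notin> u" using fresh_node[OF \<open>finite u\<close>] by blast
  define B where "B = {z. tleq l b z}"
  have "node_insertion u l (Some (\<beta>, n)) a B"
  proof unfold_locales
    show "Some (\<beta>, n) \<notin> u" "a \<in> u" "ht a < ht (Some (\<beta>, n))" "B \<subseteq> u"
      using w ab l_field by (auto simp: B_def tleq_def)
    show "l a z \<and> ht (Some (\<beta>, n)) < ht z" if "z \<in> B" for z
      using that ab l_trans tleq_ht[of b z] by (auto simp: B_def tleq_def)
    show "y \<in> B \<or> tleq l y a" if "z \<in> B" "l y z" for y z
      using that between l_below_linear[of z y b] l_field by (auto simp: B_def tleq_def)
    show "z' \<in> B" if "z \<in> B" "l z z'" for z z'
      using that l_trans by (auto simp: B_def tleq_def)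
    show "tmeet l z1 z2 \<in> B" if "z1 \<in> B" "z2 \<in> B" "z1 \<noteq> z2" for z1 z2
      using that is_meet_tmeet[of z1 z2] l_field by (auto simp: B_def is_meet_def tleq_def)
  qed
  then obtain col' where "is_cond T (insert (Some (\<beta>, n)) u, v, ins_lt l (Some (\<beta>, n)) a B, col')"
    "cle p (insert (Some (\<beta>, n)) u, v, ins_lt l (Some (\<beta>, n)) a B, col')"
    using cond_insert_node cond unfolding p by blast
  moreover have "ins_lt l (Some (\<beta>, n)) a B (Some (\<beta>, n)) x"
    using ab(2) by (simp add: ins_lt_def B_def)
  ultimately show ?thesis by (metis cond_sel(3) ht_Some)
qed

definition Dreq :: "'o::wellorder node set \<times> ('o node \<Rightarrow> 'o node \<Rightarrow> bool) \<Rightarrow> 'o node \<Rightarrow> 'o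
    \<Rightarrow> 'o node \<Rightarrow> 'o cond set" where
  "Dreq T x \<beta> s = {q \<in> QQ T. x \<in> c_u q \<and> (Some \<beta> < ht x \<longrightarrow> (\<exists>y. c_lt q y x \<and> ht y = Some \<beta>))
     \<and> (s \<in> fst T \<longrightarrow> s \<in> c_v q)}"

lemma dense_Dreq: "dense_in (QQ T) (Dreq T x \<beta> s)"
  unfolding dense_in_def
proof (intro conjI ballI)
  show "Dreq T x \<beta> s \<subseteq> QQ T" by (auto simp: Dreq_def)
  fix p assume "p \<in> QQ T"
  then obtain q1 where q1: "is_cond T q1" "cle p q1" "s \<in> fst T \<longrightarrow> s \<in> c_v q1"
    using cond_add_v cle_refl by (metis QQ_def mem_Collect_eq)
  obtain q2 where q2: "is_cond T q2" "cle q1 q2" "x \<in> c_u q2"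
    using cond_add_node[OF q1(1)] by blast
  obtain q3 where q3: "is_cond T q3" "cle q2 q3" "Some \<beta> < ht x \<longrightarrow> (\<exists>y. c_lt q3 y x \<and> ht y = Some \<beta>)"
    using cond_add_predecessor[OF q2(1,3)] q2(1) cle_refl by blast
  have "cle q1 q3" using q2(2) q3(2) by (rule cle_trans)
  then have "cle p q3" using q1(2) cle_trans by blast
  moreover have "x \<in> c_u q3" "s \<in> fst T \<longrightarrow> s \<in> c_v q3"
    using q1(3) q2(3) cleD(1)[OF q3(2)] cleD(2)[OF \<open>cle q1 q3\<close>] by blast+
  then have "q3 \<in> Dreq T x \<beta> s" using q3(1,3) by (simp add: Dreq_def QQ_def)
  ultimately show "\<exists>q\<in>Dreq T x \<beta> s. cle p q" by blast
qed

subsection \<open>The generic tree\<close>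

locale generic_filter =
  fixes S :: "'o::wellorder node set" and lt :: "'o node \<Rightarrow> 'o node \<Rightarrow> bool"
    and G :: "'o cond set"
  assumes in_A: "in_A (S, lt)"
    and filter: "filter_in (QQ (S, lt)) G"
    and generic: "\<And>x \<beta> s. G \<inter> Dreq (S, lt) x \<beta> s \<noteq> {}"
begin

definition glt :: "'o node \<Rightarrow> 'o node \<Rightarrow> bool" where
  "glt x y \<longleftrightarrow> (\<exists>p\<in>G. c_lt p x y)"

lemma G_cond: "p \<in> G \<Longrightarrow> is_cond (S, lt) p"
  using filter by (auto simp: filter_in_def QQ_def)

lemma G_directed: "p \<in> G \<Longrightarrow> q \<in> G \<Longrightarrow> \<exists>r\<in>G. cle p r \<and> cle q r"
  using filter by (auto simp: filter_in_def)

lemma G_meets_Dreq: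
  obtains p where "p \<in> G" "x \<in> c_u p" "Some \<beta> < ht x \<Longrightarrow> \<exists>y. c_lt p y x \<and> ht y = Some \<beta>"
    "s \<in> S \<Longrightarrow> s \<in> c_v p"
proof -
  obtain p where "p \<in> G" "p \<in> Dreq (S, lt) x \<beta> s" using generic by blast
  then show ?thesis by (intro that) (auto simp: Dreq_def)
qed

lemma G_extend:
  assumes "p \<in> G"
  obtains r where "r \<in> G" "cle p r" "x \<in> c_u r"
proof -
  obtain q where "q \<in> G" "x \<in> c_u q" using G_meets_Dreq[of x] by blast
  moreover obtain r where "r \<in> G" "cle p r" "cle q r" using G_directed[OF assms \<open>q \<in> G\<close>] by blast
  ultimately show ?thesis using that cleD(1) by blast
qed

lemma glt_iff:
  assumes "p \<in> G" "a \<in> c_u p" "b \<in> c_u p"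
  shows "glt a b \<longleftrightarrow> c_lt p a b"
proof
  assume "glt a b"
  then obtain q where "q \<in> G" "c_lt q a b" by (auto simp: glt_def)
  then obtain r where "r \<in> G" "cle p r" "c_lt r a b"
    using G_directed[OF assms(1)] cleD(3) by blast
  then show "c_lt p a b" using cle_reflects_lt G_cond assms by blast
qed (use assms(1) glt_def in blast)

lemma tleq_glt_iff: "p \<in> G \<Longrightarrow> a \<in> c_u p \<Longrightarrow> b \<in> c_u p \<Longrightarrow> tleq glt a b \<longleftrightarrow> tleq (c_lt p) a b"
  using glt_iff unfolding tleq_def by blast

lemma glt_ht_mono: "glt x y \<Longrightarrow> ht x < ht y"
  using meet_tree.ht_mono[OF meet_tree_cond[OF G_cond]] by (auto simp: glt_def)

lemma glt_common_cond:
  assumes "glt x y" "glt x' y'"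
  obtains r where "r \<in> G" "c_lt r x y" "c_lt r x' y'"
proof -
  obtain p q where "p \<in> G" "c_lt p x y" "q \<in> G" "c_lt q x' y'" using assms by (auto simp: glt_def)
  then show ?thesis using that G_directed cleD(3) by meson
qed

lemma tree_on_glt: "tree_on UNIV glt None"
  unfolding tree_on_def
proof (intro conjI allI impI ballI)
  show "\<not> glt x x" for x using glt_ht_mono by blast
  show "wfP glt" using glt_ht_mono by (rule wfP_if_ht_mono)
  show "glt x z" if "glt x y" "glt y z" for x y z
    using glt_common_cond[OF that] meet_tree.l_trans[OF meet_tree_cond[OF G_cond]] glt_def
    by metis
  show "y = z \<or> glt y z \<or> glt z y" if "glt y x" "glt z x" for x y z
    using glt_common_cond[OF that] meet_tree.l_below_linear[OF meet_tree_cond[OF G_cond]]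
      meet_tree.l_field[OF meet_tree_cond[OF G_cond]] glt_def
    by metis
  show "glt None x" if "x \<noteq> None" for x
    using G_meets_Dreq[of x] meet_tree.l_root[OF meet_tree_cond[OF G_cond]] that glt_def by metis
qed simp_all

lemma is_meet_glt:
  assumes "p \<in> G" "x \<in> c_u p" "y \<in> c_u p" "x \<noteq> y"
  shows "is_meet glt x y (tmeet (c_lt p) x y)"
proof -
  interpret p: meet_tree "c_u p" "c_lt p" using meet_tree_cond[OF G_cond[OF assms(1)]] .
  define m where "m = tmeet (c_lt p) x y"
  have m: "is_meet (c_lt p) x y m" "m \<in> c_u p"
    using p.is_meet_tmeet[OF assms(2-4)] by (auto simp: m_def)
  have "tleq glt z m" if "tleq glt z x" "tleq glt z y" for z
  proof -
    obtain r where r: "r \<in> G" "cle p r" "z \<in> c_u r" using G_extend[OF assms(1)] by blast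
    interpret r: meet_tree "c_u r" "c_lt r" using meet_tree_cond[OF G_cond[OF r(1)]] .
    have in_r: "x \<in> c_u r" "y \<in> c_u r" "m \<in> c_u r" using assms(2,3) m(2) cleD(1)[OF r(2)] by blast+
    have "tmeet (c_lt r) x y = m" using cleD(5)[OF r(2) assms(2-4)] by (simp add: m_def)
    then have "is_meet (c_lt r) x y m" using r.is_meet_tmeet[OF in_r(1,2) assms(4)] by simp
    then show ?thesis using that tleq_glt_iff[OF r(1)] in_r r(3) unfolding is_meet_def by blast
  qed
  then show ?thesis
    using m tleq_glt_iff[OF assms(1)] assms(2,3) unfolding is_meet_def m_def by blast
qed

lemma meet_tree_glt: "meet_tree UNIV glt"
proof (rule meet_tree.intro)
  show "tree_on UNIV glt None" by (rule tree_on_glt)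
  show "ht x < ht y" if "glt x y" for x y using that by (rule glt_ht_mono)
  fix x y :: "'o node" assume "x \<noteq> y"
  obtain p where "p \<in> G" "x \<in> c_u p" using G_meets_Dreq[of x] by blast
  then obtain r where r: "r \<in> G" "cle p r" "y \<in> c_u r" using G_extend by blast
  then have "x \<in> c_u r" using cleD(1) \<open>x \<in> c_u p\<close> by blast
  then show "\<exists>z\<in>UNIV. is_meet glt x y z" using is_meet_glt r(1,3) \<open>x \<noteq> y\<close> by blast
qed

sublocale gtree: meet_tree UNIV glt
  by (rule meet_tree_glt)

lemma tmeet_glt: "p \<in> G \<Longrightarrow> x \<in> c_u p \<Longrightarrow> y \<in> c_u p \<Longrightarrow> x \<noteq> y \<Longrightarrow> tmeet glt x y = tmeet (c_lt p) x y"
  using is_meet_glt gtree.tmeet_eqI by blast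

lemma glt_levels: "Some \<beta> < ht x \<Longrightarrow> \<exists>y. glt y x \<and> ht y = Some \<beta>"
  using G_meets_Dreq[of x \<beta>] glt_def by metis

lemma glt_normal:
  assumes "x \<noteq> y" "ht x = ht y" "limit_ht x"
  shows "{z. glt z x} \<noteq> {z. glt z y}"
proof
  assume same_preds: "{z. glt z x} = {z. glt z y}"
  define m where "m = tmeet glt x y"
  have m: "is_meet glt x y m" using gtree.is_meet_tmeet assms(1) by (simp add: m_def)
  have "m \<noteq> x" using m assms(1,2) gtree.tleq_ht unfolding is_meet_def tleq_def
    by (metis gtree.ht_mono less_irrefl)
  then have "ht m < ht x" using m gtree.ht_mono unfolding is_meet_def tleq_def by blast
  obtain \<delta> where \<delta>: "ht x = Some \<delta>" "is_limit \<delta>" using assms(3) by (auto simp: limit_ht_def)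
  obtain \<gamma> where \<gamma>: "ht m < Some \<gamma>" "\<gamma> < \<delta>"
  proof (cases "ht m")
    case None
    then show ?thesis using that \<delta>(2) by (auto simp: is_limit_def)
  next
    case (Some \<mu>)
    then show ?thesis using that \<delta> \<open>ht m < ht x\<close> by (auto simp: is_limit_def)
  qed
  obtain z where z: "glt z x" "ht z = Some \<gamma>" using glt_levels[of \<gamma> x] \<gamma>(2) \<delta>(1) by auto
  then have "tleq glt z m" using same_preds m unfolding is_meet_def tleq_def by blast
  then show False using gtree.tleq_ht \<gamma>(1) z(2) by fastforce
qed

subsection \<open>The generic colouring\<close>

lemma G_col_agree:
  assumes "p \<in> G" "q \<in> G" "k \<in> dom (c_col p)" "k \<in> dom (c_col q)"
  shows "c_col p k = c_col q k"
proof -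
  obtain r where "r \<in> G" "cle p r" "cle q r" using G_directed[OF assms(1,2)] by blast
  then show ?thesis using cleD(4) assms(3,4) unfolding map_le_def by metis
qed

definition gcol :: "'o node \<times> 'o node \<rightharpoonup> nat" where
  "gcol k = (if \<exists>p\<in>G. k \<in> dom (c_col p) then c_col (SOME p. p \<in> G \<and> k \<in> dom (c_col p)) k else None)"

lemma gcol_eq_Some_iff: "gcol k = Some n \<longleftrightarrow> (\<exists>p\<in>G. c_col p k = Some n)"
proof (cases "\<exists>p\<in>G. k \<in> dom (c_col p)")
  case True
  define p0 where "p0 = (SOME p. p \<in> G \<and> k \<in> dom (c_col p))"
  have p0: "p0 \<in> G" "k \<in> dom (c_col p0)"
    using someI_ex[OF True[unfolded Bex_def]] by (auto simp: p0_def)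
  have "gcol k = c_col p0 k" using True by (simp add: gcol_def p0_def)
  then show ?thesis using p0 G_col_agree by (metis domI)
qed (auto simp: gcol_def)

lemma graph_gcol: "Map.graph gcol = (\<Union>p\<in>G. Map.graph (c_col p))"
  unfolding Map.graph_def using gcol_eq_Some_iff by auto

lemma dom_gcol: "dom gcol = limit_pairs UNIV S"
proof (intro equalityI subsetI)
  fix k assume "k \<in> dom gcol"
  then obtain p n where p: "p \<in> G" "c_col p k = Some n" using gcol_eq_Some_iff by blast
  then have "k \<in> limit_pairs (c_u p) (c_v p)" using cond_dom_col[OF G_cond[OF p(1)]] by blast
  then show "k \<in> limit_pairs UNIV S"
    using cond_v_sub[OF G_cond[OF p(1)]] by (auto simp: limit_pairs_def)
next
  fix k assume "k \<in> limit_pairs UNIV S"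
  then obtain x y where k: "k = (x, y)" "y \<in> S" "ht x = ht y" "limit_ht x"
    by (auto simp: limit_pairs_def)
  obtain p where p: "p \<in> G" "x \<in> c_u p" "y \<in> S \<Longrightarrow> y \<in> c_v p"
    using G_meets_Dreq[of x undefined y] by blast
  then have "k \<in> dom (c_col p)"
    using cond_dom_col[OF G_cond[OF p(1)]] k by (simp add: limit_pairs_def)
  then obtain n where "c_col p k = Some n" by blast
  then show "k \<in> dom gcol" using gcol_eq_Some_iff \<open>p \<in> G\<close> by blast
qed

lemma spec_col_gcol: "spec_col glt lt gcol"
  unfolding spec_col_def
proof (intro allI impI)
  fix x1 y1 x2 y2
  assume h: "(x1, y1) \<in> dom gcol" "(x2, y2) \<in> dom gcol" "(x1, y1) \<noteq> (x2, y2)"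
    "gcol (x1, y1) = gcol (x2, y2)"
  obtain n where n: "gcol (x1, y1) = Some n" using h(1) by blast
  then have "gcol (x2, y2) = Some n" using h(4) by simp
  with n obtain p1 p2
    where "p1 \<in> G" "c_col p1 (x1, y1) = Some n" "p2 \<in> G" "c_col p2 (x2, y2) = Some n"
    using gcol_eq_Some_iff by meson
  moreover obtain r where "r \<in> G" "cle p1 r" "cle p2 r" using G_directed calculation by blast
  ultimately have r: "r \<in> G" "c_col r (x1, y1) = Some n" "c_col r (x2, y2) = Some n"
    using cleD(4) unfolding map_le_def by (metis domI)+
  then have d: "(x1, y1) \<in> dom (c_col r)" "(x2, y2) \<in> dom (c_col r)"
    "c_col r (x1, y1) = c_col r (x2, y2)"
    by auto
  have "spec_col (c_lt r) lt (c_col r)" using cond_spec_col[OF G_cond[OF r(1)]] by simp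
  from spec_colD[OF this d(1,2) h(3) d(3)]
  have old: "ht x1 \<noteq> ht x2 \<and> perp (c_lt r) x1 x2 \<and> perp lt y1 y2
      \<and> ht (tmeet lt y1 y2) < ht (tmeet (c_lt r) x1 x2)" .
  have x: "x1 \<in> c_u r" "x2 \<in> c_u r" "x1 \<noteq> x2"
    using r old cond_dom_col[OF G_cond[OF r(1)]] by (auto simp: limit_pairs_def)
  then have "perp glt x1 x2 \<longleftrightarrow> perp (c_lt r) x1 x2"
    using tleq_glt_iff[OF r(1)] unfolding perp_def by blast
  then show "ht x1 \<noteq> ht x2 \<and> perp glt x1 x2 \<and> perp lt y1 y2
      \<and> ht (tmeet lt y1 y2) < ht (tmeet glt x1 x2)"
    using old tmeet_glt[OF r(1) x] by simp
qed

subsection \<open>Branches of the generic tree\<close>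

lemma branch_down_closed_glt:
  assumes "is_branch UNIV glt B" "x \<in> B" "glt y x"
  shows "y \<in> B"
proof (rule branch_down_closed[OF assms(1), where x = x])
  show "glt a c" if "glt a b" "glt b c" for a b c using that by (rule gtree.l_trans)
  show "b = c \<or> glt b c \<or> glt c b" if "glt b a" "glt c a" for a b c
    using gtree.l_below_linear[OF UNIV_I that] .
qed (use assms in auto)

lemma inj_on_ht_chain: "is_chain glt B \<Longrightarrow> inj_on ht B"
proof (rule inj_onI, rule ccontr)
  fix x y assume "is_chain glt B" "x \<in> B" "y \<in> B" "ht x = ht y" "x \<noteq> y"
  then have "glt x y \<or> glt y x" unfolding is_chain_def tleq_def by blast
  then show False using gtree.ht_mono \<open>ht x = ht y\<close> by fastforce
qed

lemma uncountable_branch_meets_levels: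
  assumes cnt: "\<forall>\<alpha>::'o. countable {\<beta>. \<beta> < \<alpha>}"
    and branch: "is_branch UNIV glt B" and "uncountable B"
  shows "\<exists>x\<in>B. ht x = Some \<gamma>"
proof (rule ccontr)
  assume none: "\<not> (\<exists>x\<in>B. ht x = Some \<gamma>)"
  have below: "ht x < Some \<gamma>" if "x \<in> B" for x
  proof (rule ccontr)
    assume "\<not> ht x < Some \<gamma>"
    moreover have "Some \<gamma> \<noteq> ht x" using none that by force
    ultimately have "Some \<gamma> < ht x" by (simp add: not_less le_neq_trans)
    then obtain z where "glt z x" "ht z = Some \<gamma>" using glt_levels by blast
    then show False using branch_down_closed_glt[OF branch that] none by blast
  qed
  have small: "h \<in> insert None (Some ` {\<beta>. \<beta> < \<gamma>})" if "h < Some \<gamma>" for h :: "'o option"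
    using that by (cases h) auto
  have "ht ` B \<subseteq> insert None (Some ` {\<beta>. \<beta> < \<gamma>})"
    by (rule image_subsetI, rule small, rule below)
  moreover have "countable (insert None (Some ` {\<beta>. \<beta> < \<gamma>}))" using cnt by simp
  ultimately have "countable (ht ` B)" by (rule countable_subset)
  moreover have "inj_on ht B" using branch inj_on_ht_chain unfolding is_branch_def by blast
  ultimately show False using \<open>uncountable B\<close> countable_image_inj_on by blast
qed

lemma branch_countable:
  assumes unc: "uncountable (UNIV :: 'o set)" and cnt: "\<forall>\<alpha>::'o. countable {\<beta>. \<beta> < \<alpha>}"
    and branch: "is_branch UNIV glt B"
  shows "countable B"
proof (rule ccontr)
  assume "uncountable B"
  then have "\<forall>\<delta>. \<exists>x. x \<in> B \<and> ht x = Some \<delta>"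
    using uncountable_branch_meets_levels[OF cnt branch] by blast
  then obtain xs where xs: "\<forall>\<delta>. xs \<delta> \<in> B \<and> ht (xs \<delta>) = Some \<delta>" by (rule choice[THEN exE])
  have "\<forall>\<delta>. \<exists>y. y \<in> S \<and> ht y = Some \<delta>" using in_A by (auto simp: in_A_def)
  then obtain ys where ys: "\<forall>\<delta>. ys \<delta> \<in> S \<and> ht (ys \<delta>) = Some \<delta>" by (rule choice[THEN exE])
  have in_dom: "(xs \<delta>, ys \<delta>) \<in> dom gcol" if "is_limit \<delta>" for \<delta>
    using xs ys that by (auto simp: dom_gcol limit_pairs_def limit_ht_def)
  have "inj_on (\<lambda>\<delta>. the (gcol (xs \<delta>, ys \<delta>))) {\<delta>. is_limit \<delta>}"
  proof (rule inj_onI, rule ccontr)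
    fix \<delta>1 \<delta>2 assume \<delta>: "\<delta>1 \<in> {\<delta>. is_limit \<delta>}" "\<delta>2 \<in> {\<delta>. is_limit \<delta>}" "\<delta>1 \<noteq> \<delta>2"
      "the (gcol (xs \<delta>1, ys \<delta>1)) = the (gcol (xs \<delta>2, ys \<delta>2))"
    have d: "(xs \<delta>1, ys \<delta>1) \<in> dom gcol" "(xs \<delta>2, ys \<delta>2) \<in> dom gcol"
      using in_dom \<delta>(1,2) by simp_all
    then have "gcol (xs \<delta>1, ys \<delta>1) = gcol (xs \<delta>2, ys \<delta>2)"
      using \<delta>(4) by (auto simp: dom_def)
    moreover have "xs \<delta>1 \<noteq> xs \<delta>2" using xs \<delta>(3) by (metis option.inject)
    ultimately have "perp glt (xs \<delta>1) (xs \<delta>2)"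
      using spec_colD[OF spec_col_gcol d] by blast
    moreover have "is_chain glt B" using branch unfolding is_branch_def by blast
    ultimately show False using xs unfolding is_chain_def perp_def by blast
  qed
  then have "countable {\<delta>::'o. is_limit \<delta>}" unfolding countable_def by blast
  then show False using uncountable_limits[OF unc cnt] by blast
qed

lemma glt_level_set:
  assumes "x \<noteq> None"
  shows "ht ` {y. glt y x \<and> y \<noteq> None} = {Some \<beta> |\<beta>. Some \<beta> < ht x}"
proof (intro equalityI subsetI)
  fix h assume "h \<in> ht ` {y. glt y x \<and> y \<noteq> None}"
  then obtain y where y: "glt y x" "y \<noteq> None" "h = ht y" by blast
  then obtain \<alpha> n where "y = Some (\<alpha>, n)" by (metis not_None_eq surj_pair)
  then show "h \<in> {Some \<beta> |\<beta>. Some \<beta> < ht x}" using gtree.ht_mono[OF y(1)] y(3) by auto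
next
  fix h assume "h \<in> {Some \<beta> |\<beta>. Some \<beta> < ht x}"
  then obtain \<beta> where \<beta>: "h = Some \<beta>" "Some \<beta> < ht x" by blast
  then obtain y where y: "glt y x" "ht y = Some \<beta>" using glt_levels by blast
  then have "y \<noteq> None" by (simp add: not_None_if_ht_Some)
  then show "h \<in> ht ` {y. glt y x \<and> y \<noteq> None}" using y \<beta>(1) by (intro image_eqI[of _ ht y]) auto
qed

lemma in_A_glt:
  assumes "uncountable (UNIV :: 'o set)" "\<forall>\<alpha>::'o. countable {\<beta>. \<beta> < \<alpha>}"
  shows "in_A (UNIV, glt)"
  unfolding in_A_def prod.case
proof (intro conjI)
  show "tree_on UNIV glt None" by (rule gtree.tree)
  show "\<forall>x y. glt x y \<longrightarrow> ht x < ht y" using gtree.ht_mono by blast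
  show "\<forall>x\<in>UNIV. x \<noteq> None \<longrightarrow> ht ` {y. glt y x \<and> y \<noteq> None} = {Some \<beta> |\<beta>. Some \<beta> < ht x}"
    by (intro ballI impI) (rule glt_level_set)
  show "\<forall>\<alpha>. \<exists>x\<in>UNIV. ht x = Some \<alpha>" by (metis UNIV_I ht_Some)
  show "\<forall>B. is_branch UNIV glt B \<longrightarrow> countable B" using branch_countable[OF assms] by simp
  show "\<forall>x\<in>UNIV. \<forall>y\<in>UNIV. x \<noteq> y \<longrightarrow> ht x = ht y \<longrightarrow> limit_ht x \<longrightarrow> {z. glt z x} \<noteq> {z. glt z y}"
    by (intro ballI impI) (rule glt_normal)
qed

lemma generic_in_A2sp:
  assumes "uncountable (UNIV :: 'o set)" "\<forall>\<alpha>::'o. countable {\<beta>. \<beta> < \<alpha>}"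
  shows "\<exists>c. Map.graph c = (\<Union>p\<in>G. Map.graph (c_col p))
    \<and> in_A2sp (\<Union>p\<in>G. c_u p, \<lambda>x y. \<exists>p\<in>G. c_lt p x y) (S, lt) c"
proof -
  have "x \<in> (\<Union>p\<in>G. c_u p)" for x using G_meets_Dreq[of x undefined undefined] by blast
  then have "(\<Union>p\<in>G. c_u p) = UNIV" by blast
  moreover have "(\<lambda>x y. \<exists>p\<in>G. c_lt p x y) = glt" by (simp add: glt_def fun_eq_iff)
  moreover have "in_A2sp (UNIV, glt) (S, lt) gcol"
    unfolding in_A2sp_def using in_A_glt[OF assms] in_A dom_gcol spec_col_gcol by simp
  ultimately show ?thesis using graph_gcol by (intro exI) simp
qed

end

subsection \<open>Counting the dense sets\<close>

lemma cond_trivial: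
  fixes T :: "'o::wellorder node set \<times> ('o node \<Rightarrow> 'o node \<Rightarrow> bool)"
  assumes "None \<in> fst T"
  shows "is_cond T ({None}, {None}, \<lambda>_ _. False, Map.empty)"
proof -
  have "tree_on {None} (\<lambda>_ _. False) None"
    unfolding tree_on_def by (simp add: wfP_if_ht_mono)
  moreover have "\<not> limit_ht (None :: 'o node)" by (simp add: limit_ht_def)
  then have "limit_pairs {None} {None :: 'o node} = {}" unfolding limit_pairs_def by blast
  ultimately show ?thesis using assms by (simp add: is_cond_def spec_col_def is_meet_def)
qed

lemma inj_Dreq_level:
  assumes "None \<in> fst T"
  shows "inj (\<lambda>\<alpha>. Dreq T (Some (\<alpha>, 0)) \<alpha> None)"
proof (rule injI)
  fix \<alpha> \<alpha>' assume eq: "Dreq T (Some (\<alpha>, 0)) \<alpha> None = Dreq T (Some (\<alpha>', 0)) \<alpha>' None"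
  obtain q where q: "is_cond T q" "c_u q = {Some (\<alpha>, 0), None}"
    using cond_add_node[OF cond_trivial[OF assms], of "Some (\<alpha>, 0)"] by auto
  have "None \<in> c_v q" using q(1) by (simp add: is_cond_def)
  then have "q \<in> Dreq T (Some (\<alpha>, 0)) \<alpha> None" using q by (simp add: Dreq_def QQ_def)
  then have "q \<in> Dreq T (Some (\<alpha>', 0)) \<alpha>' None" using eq by simp
  then have "Some (\<alpha>', 0) \<in> c_u q" by (simp add: Dreq_def)
  then show "\<alpha> = \<alpha>'" using q(2) by simp
qed

context
  includes cardinal_syntax
begin

lemma card_of_node_le:
  assumes "infinite (UNIV :: 'o set)"
  shows "|UNIV :: 'o node set| \<le>o |UNIV :: 'o set|"
proof -
  define f :: "'o node \<Rightarrow> 'o \<times> nat" where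
    "f x = (case x of None \<Rightarrow> (undefined, 0) | Some p \<Rightarrow> (fst p, Suc (snd p)))" for x
  have "inj f"
  proof (rule injI)
    fix x y assume "f x = f y"
    then show "x = y" by (cases x; cases y) (auto simp: f_def prod_eq_iff)
  qed
  then have "|UNIV :: 'o node set| \<le>o |UNIV :: ('o \<times> nat) set|"
    by (intro card_of_ordLeq[THEN iffD1] exI[of _ f]) simp
  also have "|UNIV :: ('o \<times> nat) set| =o |UNIV :: 'o set|"
    using card_of_Times_infinite[OF assms _ infinite_iff_card_of_nat[THEN iffD1, OF assms]] by simp
  finally show ?thesis .
qed

lemma bij_Dreq_family:
  fixes T :: "'o::wellorder node set \<times> ('o node \<Rightarrow> 'o node \<Rightarrow> bool)"
  assumes "uncountable (UNIV :: 'o set)" "None \<in> fst T"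
  shows "\<exists>f. bij_betw f (UNIV :: 'o set) (range (\<lambda>(x, \<beta>, s). Dreq T x \<beta> s))"
proof -
  define F where "F = range (\<lambda>(x, \<beta>, s). Dreq T x \<beta> s)"
  have inf: "infinite (UNIV :: 'o set)" using assms(1) countable_finite by blast
  then have node: "|UNIV :: 'o node set| \<le>o |UNIV :: 'o set|" by (rule card_of_node_le)
  have "|UNIV :: ('o \<times> 'o node) set| =o |UNIV :: 'o set|"
    using card_of_Times_infinite[OF inf _ node] by simp
  then have "|UNIV :: ('o node \<times> 'o \<times> 'o node) set| \<le>o |UNIV :: ('o node \<times> 'o) set|"
    using card_of_Times_mono2 ordIso_imp_ordLeq by (metis UNIV_Times_UNIV)
  also have "|UNIV :: ('o node \<times> 'o) set| =o |UNIV :: 'o set|"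
    using card_of_Times_infinite[OF inf _ node] by simp
  finally have "|F| \<le>o |UNIV :: 'o set|"
    unfolding F_def using card_of_image ordLeq_transitive by blast
  moreover have "Dreq T (Some (\<alpha>, 0)) \<alpha> None \<in> F" for \<alpha>
    unfolding F_def by (rule image_eqI[of _ _ "(Some (\<alpha>, 0), \<alpha>, None)"]) simp_all
  then have "|UNIV :: 'o set| \<le>o |F|"
    using inj_Dreq_level[OF assms(2)] by (intro card_of_ordLeq[THEN iffD1] exI) auto
  ultimately show ?thesis unfolding F_def using card_of_ordIso ordIso_iff_ordLeq by blast
qed

end

theorem lemma4p3:
  fixes S :: "('o::wellorder) node set" and lt :: "'o node \<Rightarrow> 'o node \<Rightarrow> bool"
  assumes "uncountable (UNIV :: 'o set)"
    and "\<forall>\<alpha>::'o. countable {\<beta>. \<beta> < \<alpha>}"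
    and "in_A (S, lt)"
  shows "\<exists>F. (\<exists>f. bij_betw f (UNIV :: 'o set) F)
           \<and> (\<forall>D\<in>F. dense_in (QQ (S, lt)) D)
           \<and> (\<forall>G. filter_in (QQ (S, lt)) G \<and> (\<forall>D\<in>F. G \<inter> D \<noteq> {}) \<longrightarrow>
                (\<exists>c. Map.graph c = (\<Union>p\<in>G. Map.graph (c_col p))
                   \<and> in_A2sp (\<Union>p\<in>G. c_u p, \<lambda>x y. \<exists>p\<in>G. c_lt p x y) (S, lt) c))"
proof (rule exI, intro conjI allI impI)
  show "\<exists>f. bij_betw f (UNIV :: 'o set) (range (\<lambda>(x, \<beta>, s). Dreq (S, lt) x \<beta> s))"
    using bij_Dreq_family[OF assms(1), of "(S, lt)"] assms(3) by (simp add: in_A_def tree_on_def)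
  show "\<forall>D\<in>range (\<lambda>(x, \<beta>, s). Dreq (S, lt) x \<beta> s). dense_in (QQ (S, lt)) D"
    using dense_Dreq by auto
  fix G
  assume G: "filter_in (QQ (S, lt)) G
    \<and> (\<forall>D\<in>range (\<lambda>(x, \<beta>, s). Dreq (S, lt) x \<beta> s). G \<inter> D \<noteq> {})"
  interpret generic_filter S lt G
    using assms(3) G by unfold_locales auto
  show "\<exists>c. Map.graph c = (\<Union>p\<in>G. Map.graph (c_col p))
      \<and> in_A2sp (\<Union>p\<in>G. c_u p, \<lambda>x y. \<exists>p\<in>G. c_lt p x y) (S, lt) c"
    using generic_in_A2sp[OF assms(1,2)] .
qed

end
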